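(* Let $((T_\infty,\ell),\eta)$ have law $\mu\otimes\mathcal B(1/2)$ and let $Q_\infty=\Phi((T_\infty,\ell),\eta)$. Let $r>0$ be an integer and let $v\in V(Q_\infty)$. Then: 1. $v\in F_{-r}(Q_\infty)$ if and only if $\ell(v')>-r$ for every $v'\in[[\varnothing,v]]$; 2. $v\in\partial F_{-r}(Q_\infty)$ if and only if $\ell(v)=-r$ and $\ell(v')>-r$ for every $v'\in[[\varnothing,v]]\setminus\{v\}$. Here $[[\varnothing,v]]$ denotes the set of vertices on the geodesic path from $\varnothing$ to $v$ in the tree $T_\infty$.
   Context: **The law $\mu$.** $\rho_l$ is the law of a Galton–Watson plane tree with offspring law $P(k)=2^{-k-1}$, root label $l$, and each non-root vertex labeled by its parent's label plus an independent uniform element of $\{-1,0,1\}$. $\mu$ is the law of $(T_\infty,\ell)$, which has a spine $\varnothing=S(0),S(1),\dots$ whose labels $X_n$ form a random walk from 0 with i.i.d. uniform steps in $\{-1,0,1\}$. Conditionally on $(X_n)$, independent trees with law $\rho_{X_n}$ are grafted to the left and to the right of each $S(n)$. **The Schaeffer map $\Phi$.** Corners are indexed by $\mathbb Z$: $c_0,c_1,\dots$ are the left-side corners in clockwise contour order from the root corner $c_0$, and negative indices are the right-side corners in counterclockwise order. The successor of $c_i$ is the first $c_j$, $j>i$, with label $\ell(c_i)-1$. $\Phi$ gives the quadrangulation with vertex set $V(T_\infty)$ made of arcs from corners to successors. It is rooted at the arc from $c_0$ to its successor, with orientation reversed iff $\eta=1$. **The augmented graph $\hat Q_\infty$.** It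 is obtained from $Q_\infty$ as follows: - in each face whose vertices in clockwise order have labels $l,l+1,l,l+1$, add an edge between the two vertices labeled $l+1$; - in each face with labels $l,l+1,l+2,l+1$, double the edge between the last two vertices. **The sets $F_{-r}$ and $\partial F_{-r}$.** $F_{-r}(Q_\infty)$ is the vertex set of the connected component containing $\varnothing$ of the subgraph of $\hat Q_\infty$ induced by $\{v:\ell(v)>-r\}$. $\partial F_{-r}(Q_\infty)$ is the set of vertices $v$ with $\ell(v)\le-r$ joined by an edge of $\hat Q_\infty$ to a vertex of $F_{-r}(Q_\infty)$. *)

theory Defs
  imports Main "HOL-Library.Stream"
begin

datatype ptree = Node "ptree list"

text \<open>Vertices of a finite plane tree are Ulam--Harris words (paths from the root).\<close>
fun paths :: "ptree \<Rightarrow> nat list list"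
  and paths_list :: "nat \<Rightarrow> ptree list \<Rightarrow> nat list list" where
  "paths (Node ts) = [] # paths_list 0 ts"
| "paths_list i [] = []"
| "paths_list i (t # ts) = map (Cons i) (paths t) @ paths_list (Suc i) ts"

text \<open>Clockwise contour sequence of corners of a finite plane tree, starting and
  ending at the root (each entry is the vertex of the corner).\<close>
fun contour :: "ptree \<Rightarrow> nat list list"
  and contour_list :: "nat \<Rightarrow> ptree list \<Rightarrow> nat list list" where
  "contour (Node ts) = [] # contour_list 0 ts"
| "contour_list i [] = []"
| "contour_list i (t # ts) = map (Cons i) (contour t) @ [[]] @ contour_list (Suc i) ts"

text \<open>The tree is given by the finite plane trees L n (grafted to the left of the
  spine vertex S(n)) and R n (grafted to the right of S(n)).  A vertex is either a
  spine vertex S(n) or a non-root vertex of one of the grafted trees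
  (True = left, False = right).\<close>
datatype vtx = Spine nat | Off nat bool "nat list"

definition graft :: "(nat \<Rightarrow> ptree) \<Rightarrow> (nat \<Rightarrow> ptree) \<Rightarrow> nat \<Rightarrow> bool \<Rightarrow> ptree" where
  "graft L R n s = (if s then L n else R n)"

definition embed :: "nat \<Rightarrow> bool \<Rightarrow> nat list \<Rightarrow> vtx" where
  "embed n s p = (if p = [] then Spine n else Off n s p)"

definition verts :: "(nat \<Rightarrow> ptree) \<Rightarrow> (nat \<Rightarrow> ptree) \<Rightarrow> vtx set" where
  "verts L R = range Spine \<union>
     {Off n s p | n s p. p \<noteq> [] \<and> p \<in> set (paths (graft L R n s))}"

definition tedge :: "(nat \<Rightarrow> ptree) \<Rightarrow> (nat \<Rightarrow> ptree) \<Rightarrow> vtx \<Rightarrow> vtx \<Rightarrow> bool" where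
  "tedge L R u w \<longleftrightarrow>
     (\<exists>n. u = Spine n \<and> w = Spine (Suc n)) \<or>
     (\<exists>n s p i. u = embed n s p \<and> w = Off n s (p @ [i]) \<and>
                p @ [i] \<in> set (paths (graft L R n s)))"

text \<open>The vertices of the geodesic [[root, v]] in T_infinity (root = Spine 0).\<close>
definition geod :: "vtx \<Rightarrow> vtx set" where
  "geod v = (case v of
      Spine n \<Rightarrow> {Spine k | k. k \<le> n}
    | Off n s p \<Rightarrow> {Spine k | k. k \<le> n} \<union> {embed n s q | q. (\<exists>t. p = q @ t)})"

text \<open>Left-side corners c_0, c_1, ... in clockwise contour order from the root corner c_0.\<close>
definition leftc :: "(nat \<Rightarrow> ptree) \<Rightarrow> vtx stream" where
  "leftc L = flat (smap (\<lambda>n. map (embed n True) (contour (L n))) nats)"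

text \<open>Right-side corners c_{-1}, c_{-2}, ... in counterclockwise contour order from c_0
  (the first root corner in the list is c_0 itself and is dropped).\<close>
definition rightc :: "(nat \<Rightarrow> ptree) \<Rightarrow> vtx stream" where
  "rightc R = stl (flat (smap (\<lambda>n. map (embed n False) (rev (contour (R n)))) nats))"

definition corner :: "(nat \<Rightarrow> ptree) \<Rightarrow> (nat \<Rightarrow> ptree) \<Rightarrow> int \<Rightarrow> vtx" where
  "corner L R i = (if 0 \<le> i then leftc L !! nat i else rightc R !! nat (- i - 1))"

definition succ :: "(nat \<Rightarrow> ptree) \<Rightarrow> (nat \<Rightarrow> ptree) \<Rightarrow> (vtx \<Rightarrow> int) \<Rightarrow> int \<Rightarrow> int" where
  "succ L R lab i = (LEAST j. i < j \<and> lab (corner L R j) = lab (corner L R i) - 1)"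

text \<open>Edges of Q_infinity: arcs from each corner to its successor (undirected adjacency;
  the root edge and its orientation eta do not affect the vertex/edge sets).\<close>
definition Qadj :: "(nat \<Rightarrow> ptree) \<Rightarrow> (nat \<Rightarrow> ptree) \<Rightarrow> (vtx \<Rightarrow> int) \<Rightarrow> vtx \<Rightarrow> vtx \<Rightarrow> bool" where
  "Qadj L R lab u w \<longleftrightarrow>
     (\<exists>i. (u = corner L R i \<and> w = corner L R (succ L R lab i)) \<or>
          (w = corner L R i \<and> u = corner L R (succ L R lab i)))"

text \<open>Each face contains exactly one tree edge; the tree edge is
  traversed by the contour at the steps p \<rightarrow> p+1 and q \<rightarrow> q+1 (p < q, in opposite
  directions).  The face is the 4-cycle of vertices described by the Schaeffer
  construction (listed in cyclic order).\<close>
definition face :: "(nat \<Rightarrow> ptree) \<Rightarrow> (nat \<Rightarrow> ptree) \<Rightarrow> (vtx \<Rightarrow> int) \<Rightarrow> int \<Rightarrow> int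
                      \<Rightarrow> vtx \<times> vtx \<times> vtx \<times> vtx" where
  "face L R lab p q =
    (let c = corner L R; s = succ L R lab; a = lab (c p); b = lab (c (p + 1)) in
     if a = b then (c p, c (s p), c (p + 1), c (s q))
     else if b = a + 1 then (c p, c (s p), c (s (p + 1)), c (p + 1))
     else (c (q + 1), c (s (q + 1)), c (s q), c q))"

definition is_face :: "(nat \<Rightarrow> ptree) \<Rightarrow> (nat \<Rightarrow> ptree) \<Rightarrow> (vtx \<Rightarrow> int)
                         \<Rightarrow> vtx \<times> vtx \<times> vtx \<times> vtx \<Rightarrow> bool" where
  "is_face L R lab f \<longleftrightarrow>
     (\<exists>p q. p < q \<and> corner L R (p + 1) = corner L R q \<and> corner L R (q + 1) = corner L R p \<and>
            (tedge L R (corner L R p) (corner L R (p + 1)) \<or>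
             tedge L R (corner L R (p + 1)) (corner L R p)) \<and>
            f = face L R lab p q)"

text \<open>Edges added inside faces whose labels read l, l+1, l, l+1 cyclically: an edge
  between the two vertices labelled l+1.  (Doubling an edge in faces of type
  l, l+1, l+2, l+1 does not change adjacency, so it is not recorded.)\<close>
definition added_edge :: "(vtx \<Rightarrow> int) \<Rightarrow> vtx \<times> vtx \<times> vtx \<times> vtx \<Rightarrow> vtx \<Rightarrow> vtx \<Rightarrow> bool" where
  "added_edge lab f u w \<longleftrightarrow>
     (case f of (v1, v2, v3, v4) \<Rightarrow>
       (\<exists>l. (lab v1 = l \<and> lab v2 = l + 1 \<and> lab v3 = l \<and> lab v4 = l + 1 \<and>
              ({u, w} = {v2, v4})) \<or>
            (lab v1 = l + 1 \<and> lab v2 = l \<and> lab v3 = l + 1 \<and> lab v4 = l \<and>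
              ({u, w} = {v1, v3}))))"

definition hatQadj :: "(nat \<Rightarrow> ptree) \<Rightarrow> (nat \<Rightarrow> ptree) \<Rightarrow> (vtx \<Rightarrow> int) \<Rightarrow> vtx \<Rightarrow> vtx \<Rightarrow> bool" where
  "hatQadj L R lab u w \<longleftrightarrow>
     Qadj L R lab u w \<or> (\<exists>f. is_face L R lab f \<and> added_edge lab f u w)"

definition Fset :: "(nat \<Rightarrow> ptree) \<Rightarrow> (nat \<Rightarrow> ptree) \<Rightarrow> (vtx \<Rightarrow> int) \<Rightarrow> int \<Rightarrow> vtx set" where
  "Fset L R lab r =
     {v. (\<lambda>x y. hatQadj L R lab x y \<and> x \<in> verts L R \<and> y \<in> verts L R \<and>
               lab x > - r \<and> lab y > - r)\<^sup>*\<^sup>* (Spine 0) v \<and>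
         v \<in> verts L R \<and> lab v > - r}"

definition bdF :: "(nat \<Rightarrow> ptree) \<Rightarrow> (nat \<Rightarrow> ptree) \<Rightarrow> (vtx \<Rightarrow> int) \<Rightarrow> int \<Rightarrow> vtx set" where
  "bdF L R lab r =
     {v. v \<in> verts L R \<and> lab v \<le> - r \<and> (\<exists>w \<in> Fset L R lab r. hatQadj L R lab v w)}"

end

theory Submission
  imports Defs "HOL-Library.Sublist"
begin

text \<open>
  Going round the contour of the infinite tree, the geodesic from the root to the current corner
  changes by at most the current vertex at each step.  On the way from a corner c_i to its
  successor the contour only visits corners labelled at least l(c_i), and the successor is
  labelled l(c_i) - 1.  Hence for every edge x y of the augmented map (the added edges turn out
  to be tree edges with equal labels), the geodesic of y lies in that of x, plus y itself and
  vertices labelled at least l(x).  Following a path from the root inside {l > -r} therefore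
  never produces a geodesic that dips to -r.  Conversely every tree edge is an edge of the
  augmented map (an arc when the labels differ, an added edge when they agree), so the geodesic
  itself is such a path.
\<close>

section \<open>Streams of concatenated blocks\<close>

lemma flat_smap_fromN:
  assumes "\<And>n. f n \<noteq> []"
  shows "flat (smap f (fromN a)) = f a @- flat (smap f (fromN (Suc a)))"
  using assms by (subst siterate.ctr) simp

lemma flat_smap_fromN_block:
  assumes "\<And>n. f n \<noteq> []"
  obtains s where "flat (smap f (fromN a)) = (f a @ [hd (f (Suc a))]) @- s"
proof
  have "shd (flat (smap f (fromN (Suc a)))) = hd (f (Suc a))"
    by (subst siterate.ctr) simp
  then show "flat (smap f (fromN a)) = (f a @ [hd (f (Suc a))]) @- stl (flat (smap f (fromN (Suc a))))"
    using flat_smap_fromN[of f a, OF assms] by (metis shift_append shift.simps stream.collapse)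
qed

lemma shift_snth_Suc_less:
  "Suc k < length ys \<Longrightarrow> (ys @- s) !! k = ys ! k \<and> (ys @- s) !! Suc k = ys ! Suc k"
  by (simp add: shift_snth_less del: snth.simps)

lemma flat_successively:
  assumes nonempty: "\<And>n. f n \<noteq> []"
    and blocks: "\<And>n. successively P (f n @ [hd (f (Suc n))])"
  shows "P (flat (smap f nats) !! k) (flat (smap f nats) !! Suc k)"
proof -
  have "P (flat (smap f (fromN a)) !! k) (flat (smap f (fromN a)) !! Suc k)" for a
  proof (induction k arbitrary: a rule: less_induct)
    case (less k)
    show ?case
    proof (cases "k < length (f a)")
      case True
      obtain s where "flat (smap f (fromN a)) = (f a @ [hd (f (Suc a))]) @- s"
        using flat_smap_fromN_block[of f, OF nonempty] by blast
      moreover have "Suc k < length (f a @ [hd (f (Suc a))])"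
        using True by simp
      ultimately show ?thesis
        using successively_nth[OF blocks[of a]] shift_snth_Suc_less by metis
    next
      case False
      define t where "t = flat (smap f (fromN (Suc a)))"
      have "flat (smap f (fromN a)) !! k = t !! (k - length (f a))"
        "flat (smap f (fromN a)) !! Suc k = t !! Suc (k - length (f a))"
        using False flat_smap_fromN[of f a, OF nonempty] unfolding t_def
        by (simp_all add: shift_snth_ge Suc_diff_le del: snth.simps)
      moreover have "k - length (f a) < k"
        using False nonempty[of a] by (cases "f a") auto
      ultimately show ?thesis
        using less.IH unfolding t_def by simp
    qed
  qed
  then show ?thesis by simp
qed

lemma flat_sublist_pair:
  assumes nonempty: "\<And>n. f n \<noteq> []"
    and pair: "sublist [x, y] (f n @ [hd (f (Suc n))])"
  shows "\<exists>k. flat (smap f nats) !! k = x \<and> flat (smap f nats) !! Suc k = y"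
proof -
  have "\<exists>k. flat (smap f (fromN a)) !! k = x \<and> flat (smap f (fromN a)) !! Suc k = y"
    if "sublist [x, y] (f (a + n) @ [hd (f (Suc (a + n)))])" for a
    using that
  proof (induction n arbitrary: a)
    case 0
    then obtain ps ss where "f a @ [hd (f (Suc a))] = ps @ x # y # ss"
      by (auto simp: sublist_def)
    moreover obtain s where "flat (smap f (fromN a)) = (f a @ [hd (f (Suc a))]) @- s"
      using flat_smap_fromN_block[of f, OF nonempty] by blast
    ultimately have "flat (smap f (fromN a)) = (ps @ x # y # ss) @- s"
      by simp
    moreover have "Suc (length ps) < length (ps @ x # y # ss)"
      "(ps @ x # y # ss) ! length ps = x" "(ps @ x # y # ss) ! Suc (length ps) = y"
      by (simp_all add: nth_append)
    ultimately show ?case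
      using shift_snth_Suc_less[of "length ps" "ps @ x # y # ss" s] by metis
  next
    case (Suc n)
    then have "sublist [x, y] (f (Suc a + n) @ [hd (f (Suc (Suc a + n)))])"
      by simp
    then obtain k where "flat (smap f (fromN (Suc a))) !! k = x"
      "flat (smap f (fromN (Suc a))) !! Suc k = y"
      using Suc.IH by blast
    then show ?case
      using flat_smap_fromN[of f a, OF nonempty]
      by (intro exI[of _ "length (f a) + k"]) (simp add: shift_snth_ge del: snth.simps)
  qed
  then show ?thesis
    using pair by (metis add_0)
qed

section \<open>Walks on the integers\<close>

lemma first_descent:
  fixes f :: "int \<Rightarrow> int"
  assumes lower_step: "\<And>k. f k - 1 \<le> f (k + 1)" and "i < j" "f j < f i"
  obtains m where "i < m" "f m = f i - 1" "\<And>k. i \<le> k \<Longrightarrow> k < m \<Longrightarrow> f i \<le> f k"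
proof -
  have "\<exists>m. i < m \<and> f m = f i - 1 \<and> (\<forall>k. i \<le> k \<and> k < m \<longrightarrow> f i \<le> f k)"
    if "i \<le> j'" "\<exists>k. i < k \<and> k \<le> j' \<and> f k < f i" for j'
    using that
  proof (induction j' rule: int_ge_induct)
    case (step j)
    show ?case
    proof (cases "\<exists>k. i < k \<and> k \<le> j \<and> f k < f i")
      case False
      with step.prems have below: "f (j + 1) < f i"
        by (metis int_one_le_iff_zero_less le_less zle_add1_eq_le)
      from False have above: "\<forall>k. i \<le> k \<and> k < j + 1 \<longrightarrow> f i \<le> f k"
        by (metis le_less not_less zle_add1_eq_le)
      then have "f (j + 1) = f i - 1"
        using below lower_step[of j] \<open>i \<le> j\<close> by fastforce
      then show ?thesis
        using above \<open>i \<le> j\<close> by (intro exI[of _ "j + 1"]) auto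
    qed (use step.IH in blast)
  qed auto
  then show ?thesis
    using assms(2,3) that by (meson order.refl order_less_imp_le)
qed

lemma subset_along_walk:
  fixes c :: "int \<Rightarrow> 'a" and G :: "'a \<Rightarrow> 'a set"
  assumes "\<And>k. G (c (k + 1)) \<subseteq> insert (c (k + 1)) (G (c k))" and "i \<le> j"
  shows "G (c j) \<subseteq> G (c i) \<union> c ` {i<..j}"
  using assms(2)
proof (induction j rule: int_ge_induct)
  case (step j)
  then show ?case
    using assms(1)[of j] by fastforce
qed simp

lemma subset_along_walk_backward:
  fixes c :: "int \<Rightarrow> 'a" and G :: "'a \<Rightarrow> 'a set"
  assumes "\<And>k. G (c k) \<subseteq> insert (c k) (G (c (k + 1)))" and "i \<le> j"
  shows "G (c i) \<subseteq> G (c j) \<union> c ` {i..<j}"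
  using assms(2)
proof (induction i rule: int_le_induct)
  case (step i)
  then show ?case
    using assms(1)[of "i - 1"] by fastforce
qed simp

section \<open>Contours of finite plane trees\<close>

definition child_or_parent :: "nat list set \<Rightarrow> nat list \<Rightarrow> nat list \<Rightarrow> bool" where
  "child_or_parent V p q \<longleftrightarrow> (\<exists>k. q = p @ [k] \<and> q \<in> V) \<or> (\<exists>k. p = q @ [k] \<and> p \<in> V)"

lemma child_or_parent_mono: "child_or_parent V p q \<Longrightarrow> V \<subseteq> W \<Longrightarrow> child_or_parent W p q"
  unfolding child_or_parent_def by blast

lemma child_or_parent_Cons: "child_or_parent V p q \<Longrightarrow> child_or_parent (Cons i ` V) (i # p) (i # q)"
  unfolding child_or_parent_def by auto

lemma contour_hd_last:
  "contour t \<noteq> [] \<and> hd (contour t) = [] \<and> last (contour t) = []"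
  "last ([] # contour_list i ts) = []"
  by (induction t and i ts rule: contour_contour_list.induct) auto

lemma Nil_in_paths: "[] \<in> set (paths t)"
  by (cases t) simp

lemma successively_child_or_parent_contour:
  "successively (child_or_parent (set (paths t))) (contour t)"
  "successively (child_or_parent (set (paths_list i ts))) ([] # contour_list i ts)"
proof (induction t and i ts rule: contour_contour_list.induct)
  case (3 i t ts)
  let ?V = "set (paths_list i (t # ts))"
  have "successively (child_or_parent ?V) (map (Cons i) (contour t))"
    using "3.IH"(1) unfolding successively_map
    by (rule successively_mono) (auto intro: child_or_parent_mono[OF child_or_parent_Cons])
  moreover have "successively (child_or_parent ?V) ([] # contour_list (Suc i) ts)"
    using "3.IH"(2) by (rule successively_mono) (auto intro: child_or_parent_mono)
  moreover have "child_or_parent ?V [] [i]" "child_or_parent ?V [i] []"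
    using Nil_in_paths[of t] unfolding child_or_parent_def by auto
  ultimately show ?case
    using contour_hd_last(1)[of t]
    by (auto simp: successively_append_iff successively_Cons hd_map last_map)
next
  case (1 ts)
  then show ?case
    by (simp, rule successively_mono) (auto intro: child_or_parent_mono)
qed simp

lemma contour_traverses_edge:
  "p @ [k] \<in> set (paths t) \<Longrightarrow> sublist [p, p @ [k]] (contour t) \<and> sublist [p @ [k], p] (contour t)"
  "p @ [k] \<in> set (paths_list i ts) \<Longrightarrow>
     sublist [p, p @ [k]] ([] # contour_list i ts) \<and> sublist [p @ [k], p] ([] # contour_list i ts)"
proof (induction t and i ts arbitrary: p and p rule: contour_contour_list.induct)
  case (3 i t ts)
  define C where "C = map (Cons i) (contour t)"
  define rest where "rest = [] # contour_list (Suc i) ts"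
  have whole: "[] # contour_list i (t # ts) = [[]] @ C @ rest"
    unfolding C_def rest_def by simp
  have "C \<noteq> []" "hd C = [i]" "last C = [i]"
    using contour_hd_last(1)[of t] by (auto simp: C_def hd_map last_map)
  then have "C = [i] # tl C" "C = butlast C @ [[i]]"
    by (metis list.collapse, metis append_butlast_last_id)
  from "3.prems" consider p' where "p = i # p'" "p' @ [k] \<in> set (paths t)"
    | "p = []" "k = i" | "p @ [k] \<in> set (paths_list (Suc i) ts)"
    by (cases p) auto
  then show ?case
  proof cases
    case 1
    then have "sublist [p, p @ [k]] C \<and> sublist [p @ [k], p] C"
      using "3.IH"(1) map_mono_sublist unfolding C_def by fastforce
    then show ?thesis
      unfolding whole by (meson sublist_appendI sublist_order.order_trans)
  next
    case 2
    have "[] # contour_list i (t # ts) = [[], [i]] @ tl C @ rest"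
      "[] # contour_list i (t # ts) = ([] # butlast C) @ [[i], []] @ tl rest"
      unfolding whole by (subst \<open>C = [i] # tl C\<close>; simp) (subst \<open>C = butlast C @ [[i]]\<close>; simp add: rest_def)
    then show ?thesis
      using 2 by (metis append_Nil sublist_appendI)
  next
    case 3
    then have "sublist [p, p @ [k]] rest \<and> sublist [p @ [k], p] rest"
      using "3.IH"(2) unfolding rest_def by blast
    then show ?thesis
      unfolding whole by (meson sublist_append_leftI sublist_order.order_trans)
  qed
qed simp_all

lemma paths_prefix_closed:
  "p @ q \<in> set (paths t) \<Longrightarrow> p \<in> set (paths t)"
  "p @ q \<in> set (paths_list i ts) \<Longrightarrow> p \<noteq> [] \<Longrightarrow> p \<in> set (paths_list i ts)"
proof (induction t and i ts arbitrary: p and p rule: paths_paths_list.induct)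
  case (1 ts)
  then show ?case by (cases "p = []") auto
next
  case (3 i t ts)
  show ?case
  proof (cases "p @ q \<in> set (paths_list (Suc i) ts)")
    case True
    then show ?thesis using "3.IH"(2) "3.prems"(2) by simp
  next
    case False
    then obtain p' where "p = i # p'" "p' @ q \<in> set (paths t)"
      using "3.prems" by (cases p) auto
    then show ?thesis using "3.IH"(1) by simp
  qed
qed simp

section \<open>The corners of the infinite tree\<close>

definition left_block :: "(nat \<Rightarrow> ptree) \<Rightarrow> nat \<Rightarrow> vtx list" where
  "left_block L n = map (embed n True) (contour (L n))"

definition right_block :: "(nat \<Rightarrow> ptree) \<Rightarrow> nat \<Rightarrow> vtx list" where
  "right_block R n = map (embed n False) (rev (contour (R n)))"

definition right_contour :: "(nat \<Rightarrow> ptree) \<Rightarrow> vtx stream" where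
  "right_contour R = flat (smap (right_block R) nats)"

definition tadj :: "(nat \<Rightarrow> ptree) \<Rightarrow> (nat \<Rightarrow> ptree) \<Rightarrow> vtx \<Rightarrow> vtx \<Rightarrow> bool" where
  "tadj L R u w \<longleftrightarrow> tedge L R u w \<or> tedge L R w u"

lemma tadj_sym: "tadj L R u w \<Longrightarrow> tadj L R w u"
  by (auto simp: tadj_def)

lemma embed_Nil [simp]: "embed n s [] = Spine n"
  and embed_Cons [simp]: "embed n s (a # p) = Off n s (a # p)"
  and embed_snoc [simp]: "embed n s (p @ [a]) = Off n s (p @ [a])"
  by (simp_all add: embed_def)

lemma left_block_nonempty: "left_block L n \<noteq> []"
  and left_block_hd_last: "hd (left_block L n) = Spine n" "last (left_block L n) = Spine n"
  using contour_hd_last(1)[of "L n"] by (auto simp: left_block_def hd_map last_map)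

lemma right_block_nonempty: "right_block R n \<noteq> []"
  and right_block_hd_last: "hd (right_block R n) = Spine n" "last (right_block R n) = Spine n"
  using contour_hd_last(1)[of "R n"] by (auto simp: right_block_def hd_map last_map hd_rev last_rev)

lemma tedge_Spine: "tedge L R (Spine n) (Spine (Suc n))"
  by (auto simp: tedge_def)

lemma child_or_parent_tadj:
  "child_or_parent (set (paths (graft L R n s))) p q \<Longrightarrow> tadj L R (embed n s p) (embed n s q)"
  unfolding child_or_parent_def tadj_def tedge_def by auto

lemma successively_left_block:
  "successively (tadj L R) (left_block L n @ [hd (left_block L (Suc n))])"
proof -
  have "successively (tadj L R) (left_block L n)"
    using successively_child_or_parent_contour(1)[of "L n"] unfolding left_block_def successively_map
    by (rule successively_mono) (simp add: child_or_parent_tadj[of L R n True, unfolded graft_def, simplified])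
  then show ?thesis
    using left_block_nonempty left_block_hd_last tedge_Spine
    by (auto simp: successively_append_iff tadj_def)
qed

lemma successively_right_block:
  "successively (tadj L R) (right_block R n @ [hd (right_block R (Suc n))])"
proof -
  have "successively (tadj L R) (right_block R n)"
    using successively_child_or_parent_contour(1)[of "R n"] unfolding right_block_def successively_map successively_rev
    by (rule successively_mono) (auto intro: tadj_sym simp: child_or_parent_tadj[of L R n False, unfolded graft_def, simplified])
  then show ?thesis
    using right_block_nonempty right_block_hd_last tedge_Spine
    by (auto simp: successively_append_iff tadj_def)
qed

lemma leftc_eq: "leftc L = flat (smap (left_block L) nats)"
  unfolding leftc_def left_block_def ..

lemma corner_nonneg: "corner L R (int k) = leftc L !! k"
  by (simp add: corner_def)

lemma corner_nonpos: "corner L R (- int k) = right_contour R !! k"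
proof (cases k)
  case 0
  have "leftc L !! 0 = Spine 0" "right_contour R !! 0 = Spine 0"
    using left_block_hd_last right_block_hd_last
    by (simp_all add: leftc_def right_contour_def left_block_def[symmetric] right_block_def[symmetric]
        left_block_nonempty right_block_nonempty siterate.ctr[of Suc 0] hd_conv_nth)
  then show ?thesis by (simp add: 0 corner_def)
next
  case (Suc m)
  have "rightc R = stl (right_contour R)"
    unfolding rightc_def right_contour_def right_block_def ..
  then show ?thesis by (simp add: Suc corner_def)
qed

lemma tadj_corner_Suc: "tadj L R (corner L R i) (corner L R (i + 1))"
proof (cases "0 \<le> i")
  case True
  then obtain k where "i = int k" by (metis nonneg_int_cases)
  moreover have "tadj L R (leftc L !! k) (leftc L !! Suc k)"
    unfolding leftc_eq
    by (rule flat_successively[of "left_block L" "tadj L R", OF left_block_nonempty successively_left_block])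
  ultimately show ?thesis
    using corner_nonneg[of L R k] corner_nonneg[of L R "Suc k"] by (simp add: add.commute)
next
  case False
  define k where "k = nat (- i - 1)"
  have "i = - int (Suc k)" "i + 1 = - int k"
    using False by (simp_all add: k_def)
  moreover have "tadj L R (right_contour R !! k) (right_contour R !! Suc k)"
    unfolding right_contour_def
    by (rule flat_successively[of "right_block R" "tadj L R", OF right_block_nonempty successively_right_block])
  ultimately show ?thesis
    using corner_nonpos[of L R k] corner_nonpos[of L R "Suc k"] tadj_sym by metis
qed

lemma left_block_pair:
  assumes "sublist [x, y] (left_block L n @ [hd (left_block L (Suc n))])"
  shows "\<exists>d. corner L R d = x \<and> corner L R (d + 1) = y"
proof -
  obtain k where "leftc L !! k = x" "leftc L !! Suc k = y"
    using flat_sublist_pair[of "left_block L", OF left_block_nonempty assms] unfolding leftc_eq by blast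
  then show ?thesis
    using corner_nonneg[of L R k] corner_nonneg[of L R "Suc k"] by (metis of_nat_Suc add.commute)
qed

lemma right_block_pair:
  assumes "sublist [x, y] (right_block R n @ [hd (right_block R (Suc n))])"
  shows "\<exists>d. corner L R d = y \<and> corner L R (d + 1) = x"
proof -
  obtain k where "right_contour R !! k = x" "right_contour R !! Suc k = y"
    using flat_sublist_pair[of "right_block R", OF right_block_nonempty assms]
    unfolding right_contour_def by blast
  moreover have "- int (Suc k) + 1 = - int k" by simp
  ultimately show ?thesis
    using corner_nonpos[of L R k] corner_nonpos[of L R "Suc k"] by metis
qed

lemma tedge_traversed:
  assumes "tedge L R u w"
  shows "(\<exists>d. corner L R d = u \<and> corner L R (d + 1) = w) \<and> (\<exists>d. corner L R d = w \<and> corner L R (d + 1) = u)"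
  using assms unfolding tedge_def
proof (elim disjE exE conjE)
  fix n assume uw: "u = Spine n" "w = Spine (Suc n)"
  have "sublist [Spine n, Spine (Suc n)] (left_block L n @ [hd (left_block L (Suc n))])"
    "sublist [Spine n, Spine (Suc n)] (right_block R n @ [hd (right_block R (Suc n))])"
    using append_butlast_last_id[OF left_block_nonempty, of L n]
      append_butlast_last_id[OF right_block_nonempty, of R n]
    by (metis left_block_hd_last right_block_hd_last append.assoc append_Cons append_Nil sublist_append_leftI)+
  then show ?thesis
    using uw left_block_pair right_block_pair by blast
next
  fix n s p i
  assume uw: "u = embed n s p" "w = Off n s (p @ [i])" and edge: "p @ [i] \<in> set (paths (graft L R n s))"
  have contour: "sublist [p, p @ [i]] (contour (graft L R n s))" "sublist [p @ [i], p] (contour (graft L R n s))"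
    using contour_traverses_edge(1)[OF edge] by blast+
  show ?thesis
  proof (cases s)
    case True
    then have "sublist [u, w] (left_block L n)" "sublist [w, u] (left_block L n)"
      using contour map_mono_sublist[where f = "embed n True"] unfolding uw left_block_def graft_def
      by fastforce+
    then have "sublist [u, w] (left_block L n @ [hd (left_block L (Suc n))])"
      "sublist [w, u] (left_block L n @ [hd (left_block L (Suc n))])"
      by (simp_all add: sublist_append)
    then show ?thesis
      using left_block_pair by blast
  next
    case False
    have "sublist [p, p @ [i]] (rev (contour (R n)))" "sublist [p @ [i], p] (rev (contour (R n)))"
      using contour False by (simp_all add: sublist_rev_right graft_def)
    then have "sublist [u, w] (right_block R n)" "sublist [w, u] (right_block R n)"
      using False map_mono_sublist[where f = "embed n False"] unfolding uw right_block_def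
      by fastforce+
    then have "sublist [u, w] (right_block R n @ [hd (right_block R (Suc n))])"
      "sublist [w, u] (right_block R n @ [hd (right_block R (Suc n))])"
      by (simp_all add: sublist_append)
    then show ?thesis
      using right_block_pair by blast
  qed
qed

section \<open>Geodesics\<close>

lemma geod_tedge: "tedge L R x y \<Longrightarrow> geod y = insert y (geod x)"
  unfolding tedge_def
proof (elim disjE exE conjE)
  fix n s p i
  assume xy: "x = embed n s p" "y = Off n s (p @ [i])"
  have "{embed n s q |q. prefix q (p @ [i])} = insert y {embed n s q |q. prefix q p}"
    using xy by (auto, metis embed_snoc)
  then show ?thesis
    using xy by (cases p) (auto simp: geod_def prefix_def)
qed (auto simp: geod_def le_Suc_eq)

lemma geod_tadj: "tadj L R x y \<Longrightarrow> geod y \<subseteq> insert y (geod x)"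
  unfolding tadj_def using geod_tedge by blast

fun depth :: "vtx \<Rightarrow> nat" where
  "depth (Spine n) = n"
| "depth (Off n s p) = n + length p"

lemma depth_embed: "depth (embed n s p) = n + length p"
  by (cases p) auto

lemma depth_tedge: "tedge L R x y \<Longrightarrow> depth y = Suc (depth x)"
  unfolding tedge_def by (auto simp: depth_embed)

lemma depth_le_if_in_geod: "z \<in> geod v \<Longrightarrow> depth z \<le> depth v"
  by (cases v) (auto simp: geod_def depth_embed prefix_def)

lemma tedge_notin_geod: "tedge L R x y \<Longrightarrow> y \<notin> geod x"
  using depth_le_if_in_geod depth_tedge by fastforce

lemma in_geod_self: "v \<in> verts L R \<Longrightarrow> v \<in> geod v"
  by (auto simp: verts_def geod_def) (metis append_Nil2 embed_def)

lemma geod_Spine_0: "geod (Spine 0) = {Spine 0}"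
  by (auto simp: geod_def)

lemma tedge_verts: "tedge L R x y \<Longrightarrow> x \<in> verts L R \<and> y \<in> verts L R"
  unfolding tedge_def verts_def
  by (auto simp: embed_def) (meson paths_prefix_closed(1))

lemma exists_tedge_to:
  assumes "v \<in> verts L R" "v \<noteq> Spine 0"
  obtains u where "tedge L R u v"
proof -
  consider n where "v = Spine (Suc n)"
    | n s p i where "v = Off n s (p @ [i])" "p @ [i] \<in> set (paths (graft L R n s))"
    using assms unfolding verts_def by (auto, metis not0_implies_Suc, metis rev_exhaust)
  then show ?thesis
    using that by cases (auto simp: tedge_def)
qed

lemma verts_induct [consumes 1, case_names root tedge]:
  assumes "v \<in> verts L R" "P (Spine 0)"
    and "\<And>u w. tedge L R u w \<Longrightarrow> u \<in> verts L R \<Longrightarrow> P u \<Longrightarrow> P w"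
  shows "P v"
  using assms(1)
proof (induction "depth v" arbitrary: v rule: less_induct)
  case less
  show ?case
  proof (cases "v = Spine 0")
    case False
    then obtain u where "tedge L R u v"
      using less.prems exists_tedge_to by blast
    then show ?thesis
      using less tedge_verts depth_tedge assms(3) by (metis lessI)
  qed (simp add: assms(2))
qed

lemma geod_corner_walk:
  assumes "i \<le> j"
  shows "geod (corner L R j) \<subseteq> geod (corner L R i) \<union> corner L R ` {i<..j}"
    and "geod (corner L R i) \<subseteq> geod (corner L R j) \<union> corner L R ` {i..<j}"
proof -
  have forward: "geod (corner L R (k + 1)) \<subseteq> insert (corner L R (k + 1)) (geod (corner L R k))"
    and backward: "geod (corner L R k) \<subseteq> insert (corner L R k) (geod (corner L R (k + 1)))" for k
    using geod_tadj[OF tadj_corner_Suc] geod_tadj[OF tadj_sym[OF tadj_corner_Suc]] by blast+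
  show "geod (corner L R j) \<subseteq> geod (corner L R i) \<union> corner L R ` {i<..j}"
    by (rule subset_along_walk[where G = geod and c = "corner L R", OF forward assms])
  show "geod (corner L R i) \<subseteq> geod (corner L R j) \<union> corner L R ` {i..<j}"
    by (rule subset_along_walk_backward[where G = geod and c = "corner L R", OF backward assms])
qed

section \<open>Successors and the augmented map\<close>

text \<open>The second vertex of a face is always the successor of the first, so only the label
  pattern l+1, l, l+1, l can carry an added edge.\<close>

lemma added_edge_after_descent:
  assumes "added_edge lab (v1, v2, v3, v4) u w" "lab v2 = lab v1 - 1"
  shows "lab v3 = lab v1 \<and> lab v4 = lab v1 - 1 \<and> {u, w} = {v1, v3}"
proof -
  obtain l where "lab v1 = l \<and> lab v2 = l + 1 \<and> lab v3 = l \<and> lab v4 = l + 1 \<and> {u, w} = {v2, v4} \<or>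
      lab v1 = l + 1 \<and> lab v2 = l \<and> lab v3 = l + 1 \<and> lab v4 = l \<and> {u, w} = {v1, v3}"
    using assms(1) unfolding added_edge_def by blast
  then show ?thesis
    using assms(2) by (elim disjE conjE) simp_all
qed

lemma hatQadj_sym: "hatQadj L R lab u w \<Longrightarrow> hatQadj L R lab w u"
  unfolding hatQadj_def Qadj_def added_edge_def by (auto simp: insert_commute split: prod.splits)

locale labelled_tree =
  fixes L R :: "nat \<Rightarrow> ptree" and lab :: "vtx \<Rightarrow> int"
  assumes edge_labels: "\<And>u w. tedge L R u w \<Longrightarrow> lab w - lab u \<in> {-1, 0, 1}"
    and left_unbounded: "\<And>m. \<exists>k. lab (leftc L !! k) < m"
begin

abbreviation c :: "int \<Rightarrow> vtx" where "c \<equiv> corner L R"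
abbreviation sc :: "int \<Rightarrow> int" where "sc \<equiv> succ L R lab"

lemma tadj_lab_diff: "tadj L R u w \<Longrightarrow> \<bar>lab u - lab w\<bar> \<le> 1"
  unfolding tadj_def using edge_labels by fastforce

lemma exists_later_lower_corner: "\<exists>j > i. lab (c j) < lab (c i)"
proof -
  define m where "m = min (lab (c i)) (Min ((\<lambda>k. lab (leftc L !! k)) ` {..nat i}))"
  obtain k where k: "lab (leftc L !! k) < m"
    using left_unbounded by blast
  have "nat i < k"
  proof (rule ccontr)
    assume "\<not> nat i < k"
    then have "Min ((\<lambda>k. lab (leftc L !! k)) ` {..nat i}) \<le> lab (leftc L !! k)"
      by (intro Min_le) auto
    with k show False
      unfolding m_def by linarith
  qed
  then show ?thesis
    using k corner_nonneg[of L R k] unfolding m_def by (intro exI[of _ "int k"]) auto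
qed

lemma succ_spec:
  shows "i < sc i" and "lab (c (sc i)) = lab (c i) - 1"
    and "\<And>k. i \<le> k \<Longrightarrow> k < sc i \<Longrightarrow> lab (c i) \<le> lab (c k)"
proof -
  obtain j where j: "i < j" "lab (c j) < lab (c i)"
    using exists_later_lower_corner by blast
  have lower_step: "lab (c k) - 1 \<le> lab (c (k + 1))" for k
    using tadj_lab_diff[OF tadj_corner_Suc[of L R k]] by linarith
  obtain m where m: "i < m" "lab (c m) = lab (c i) - 1"
    "\<And>k. i \<le> k \<Longrightarrow> k < m \<Longrightarrow> lab (c i) \<le> lab (c k)"
    using first_descent[of "\<lambda>k. lab (c k)", OF lower_step j] by blast
  have "sc i = m"
    unfolding succ_def
  proof (rule Least_equality)
    show "m \<le> j" if "i < j \<and> lab (c j) = lab (c i) - 1" for j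
      using m(3)[of j] that by fastforce
  qed (use m in simp)
  with m show "i < sc i" "lab (c (sc i)) = lab (c i) - 1"
    "\<And>k. i \<le> k \<Longrightarrow> k < sc i \<Longrightarrow> lab (c i) \<le> lab (c k)"
    by auto
qed

lemma succ_eq_Suc: "lab (c (i + 1)) = lab (c i) - 1 \<Longrightarrow> sc i = i + 1"
  unfolding succ_def by (rule Least_equality) auto

lemma added_edge_tadj:
  assumes "is_face L R lab f" "added_edge lab f u w"
  shows "tadj L R u w \<and> lab u = lab w"
proof -
  obtain p q where pq: "c (p + 1) = c q" "c (q + 1) = c p"
      "tadj L R (c p) (c (p + 1))" "f = face L R lab p q"
    using assms(1) unfolding is_face_def tadj_def by blast
  consider "f = (c p, c (sc p), c (p + 1), c (sc q))"
    | "lab (c (p + 1)) = lab (c p) + 1" "f = (c p, c (sc p), c (sc (p + 1)), c (p + 1))"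
    | "lab (c (p + 1)) \<noteq> lab (c p) + 1" "f = (c (q + 1), c (sc (q + 1)), c (sc q), c q)"
    using pq(4) unfolding face_def Let_def by metis
  then show ?thesis
  proof cases
    case 1
    then have "lab (c (p + 1)) = lab (c p) \<and> {u, w} = {c p, c (p + 1)}"
      using added_edge_after_descent assms(2) succ_spec(2) by metis
    with pq(3) show ?thesis
      unfolding doubleton_eq_iff by (auto intro: tadj_sym)
  next
    case 2
    then have "lab (c (p + 1)) = lab (c p) - 1"
      using added_edge_after_descent assms(2) succ_spec(2) by metis
    with 2 show ?thesis by simp
  next
    case 3
    then have "lab (c (sc q)) = lab (c (q + 1))"
      using added_edge_after_descent assms(2) succ_spec(2) by metis
    with 3 pq(1,2) show ?thesis by (simp add: succ_spec(2))
  qed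
qed

lemma hatQadj_cases:
  assumes "hatQadj L R lab u w"
  obtains i where "u = c i" "w = c (sc i)"
    | i where "w = c i" "u = c (sc i)"
    | "tadj L R u w" "lab u = lab w"
  using assms added_edge_tadj unfolding hatQadj_def Qadj_def by blast

text \<open>The face containing a tree edge is the one between the two traversals of that edge.\<close>

lemma tedge_same_label_added_edge:
  assumes "tedge L R x y" "lab x = lab y"
  shows "\<exists>f. is_face L R lab f \<and> added_edge lab f x y"
proof -
  have face: "is_face L R lab (face L R lab p q) \<and> added_edge lab (face L R lab p q) x y"
    if "p < q" "c (p + 1) = c q" "c (q + 1) = c p" "{c p, c (p + 1)} = {x, y}" for p q
  proof
    show "is_face L R lab (face L R lab p q)"
      using that assms(1) unfolding is_face_def doubleton_eq_iff by blast
    have same: "lab (c p) = lab (c (p + 1))"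
      using that(4) assms(2) unfolding doubleton_eq_iff by auto
    have "lab (c (sc p)) = lab (c p) - 1" "lab (c (sc q)) = lab (c p) - 1"
      using succ_spec(2) that(2) same by metis+
    then have "added_edge lab (c p, c (sc p), c (p + 1), c (sc q)) x y"
      using same that(4) unfolding added_edge_def prod.case
      by (intro exI[of _ "lab (c p) - 1"] disjI2) simp
    moreover have "face L R lab p q = (c p, c (sc p), c (p + 1), c (sc q))"
      using same unfolding face_def Let_def by simp
    ultimately show "added_edge lab (face L R lab p q) x y"
      by simp
  qed
  obtain d e where de: "c d = x" "c (d + 1) = y" "c e = y" "c (e + 1) = x"
    using tedge_traversed[OF assms(1)] by blast
  have "d \<noteq> e"
    using de depth_tedge[OF assms(1)] by auto
  then consider "d < e" | "e < d" by linarith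
  then show ?thesis
  proof cases
    case 1
    have "is_face L R lab (face L R lab d e) \<and> added_edge lab (face L R lab d e) x y"
      using 1 de by (intro face) auto
    then show ?thesis by blast
  next
    case 2
    have "is_face L R lab (face L R lab e d) \<and> added_edge lab (face L R lab e d) x y"
      using 2 de by (intro face) (auto simp: insert_commute)
    then show ?thesis by blast
  qed
qed

lemma tedge_hatQadj:
  assumes "tedge L R x y"
  shows "hatQadj L R lab x y"
proof -
  obtain d e where de: "c d = x" "c (d + 1) = y" "c e = y" "c (e + 1) = x"
    using tedge_traversed[OF assms] by blast
  consider "lab y = lab x - 1" | "lab y = lab x + 1" | "lab y = lab x"
    using edge_labels[OF assms] by force
  then show ?thesis
  proof cases
    case 1
    then have "sc d = d + 1" using de succ_eq_Suc by simp
    then show ?thesis unfolding hatQadj_def Qadj_def using de by metis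
  next
    case 2
    then have "sc e = e + 1" using de succ_eq_Suc by simp
    then show ?thesis unfolding hatQadj_def Qadj_def using de by metis
  next
    case 3
    then show ?thesis
      unfolding hatQadj_def using tedge_same_label_added_edge[OF assms] by simp
  qed
qed

lemma geod_succ_arc:
  shows "geod (c (sc i)) \<subseteq> insert (c (sc i)) (geod (c i) \<union> {z. lab (c i) \<le> lab z})"
    and "geod (c i) \<subseteq> geod (c (sc i)) \<union> {z. lab (c i) \<le> lab z}"
proof -
  have walk: "geod (c (sc i)) \<subseteq> geod (c i) \<union> c ` {i<..sc i}"
    "geod (c i) \<subseteq> geod (c (sc i)) \<union> c ` {i..<sc i}"
    using geod_corner_walk[OF less_imp_le[OF succ_spec(1)]] by simp_all
  have "c ` {i..<sc i} \<subseteq> {z. lab (c i) \<le> lab z}"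
    using succ_spec(3) by auto
  moreover have "{i<..sc i} \<subseteq> insert (sc i) {i..<sc i}"
    by auto
  ultimately have "c ` {i<..sc i} \<subseteq> insert (c (sc i)) {z. lab (c i) \<le> lab z}"
    by blast
  with walk show "geod (c (sc i)) \<subseteq> insert (c (sc i)) (geod (c i) \<union> {z. lab (c i) \<le> lab z})"
    and "geod (c i) \<subseteq> geod (c (sc i)) \<union> {z. lab (c i) \<le> lab z}"
    using \<open>c ` {i..<sc i} \<subseteq> {z. lab (c i) \<le> lab z}\<close> by blast+
qed

lemma geod_hatQadj:
  assumes "hatQadj L R lab x y"
  shows "geod y \<subseteq> insert y (geod x \<union> {z. lab x \<le> lab z})"
  using assms
proof (cases rule: hatQadj_cases)
  case (1 i)
  then show ?thesis using geod_succ_arc(1)[of i] by simp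
next
  case (2 i)
  then have "{z. lab y \<le> lab z} \<subseteq> {z. lab x \<le> lab z}"
    using succ_spec(2)[of i] by auto
  then show ?thesis using geod_succ_arc(2)[of i] 2 by blast
next
  case 3
  then show ?thesis using geod_tadj by blast
qed

lemma hatQadj_lab_diff:
  assumes "hatQadj L R lab x y"
  shows "\<bar>lab x - lab y\<bar> \<le> 1"
  using assms
proof (cases rule: hatQadj_cases)
  case (1 i)
  then show ?thesis using succ_spec(2)[of i] by simp
next
  case (2 i)
  then show ?thesis using succ_spec(2)[of i] by simp
qed simp

section \<open>The hull and its boundary\<close>

lemma Fset_iff_geod:
  assumes "lab (Spine 0) = 0" "r > 0" "v \<in> verts L R"
  shows "v \<in> Fset L R lab r \<longleftrightarrow> (\<forall>z \<in> geod v. lab z > - r)"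
proof -
  define E where "E x y \<longleftrightarrow> hatQadj L R lab x y \<and> x \<in> verts L R \<and> y \<in> verts L R \<and> lab x > - r \<and> lab y > - r"
    for x y
  have Fset: "v \<in> Fset L R lab r \<longleftrightarrow> E\<^sup>*\<^sup>* (Spine 0) v \<and> lab v > - r"
    using assms(3) unfolding Fset_def E_def by simp
  show ?thesis
  proof
    assume "v \<in> Fset L R lab r"
    then have "E\<^sup>*\<^sup>* (Spine 0) v" unfolding Fset by blast
    then show "\<forall>z \<in> geod v. lab z > - r"
    proof (induction rule: rtranclp_induct)
      case base
      then show ?case using assms(1,2) by (simp add: geod_Spine_0)
    next
      case (step x y)
      then show ?case using geod_hatQadj[of x y] unfolding E_def by fastforce
    qed
  next
    assume above: "\<forall>z \<in> geod v. lab z > - r"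
    have "E\<^sup>*\<^sup>* (Spine 0) v"
      using assms(3) above
    proof (induction rule: verts_induct)
      case (tedge u w)
      have u_above: "\<forall>z \<in> geod u. lab z > - r"
        using tedge.prems geod_tedge[OF tedge.hyps(1)] by blast
      have "u \<in> geod u" "w \<in> geod w" "u \<in> verts L R" "w \<in> verts L R"
        using tedge.hyps in_geod_self tedge_verts by blast+
      then have "E u w"
        unfolding E_def using tedge_hatQadj[OF tedge.hyps(1)] u_above tedge.prems by blast
      with tedge.IH[OF u_above] show ?case
        by (rule rtranclp.rtrancl_into_rtrancl)
    qed simp
    then show "v \<in> Fset L R lab r"
      unfolding Fset using above in_geod_self[OF assms(3)] by blast
  qed
qed

lemma bdF_iff_geod:
  assumes "lab (Spine 0) = 0" "r > 0" "v \<in> verts L R"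
  shows "v \<in> bdF L R lab r \<longleftrightarrow> lab v = - r \<and> (\<forall>z \<in> geod v - {v}. lab z > - r)"
proof
  assume "v \<in> bdF L R lab r"
  then obtain w where w: "w \<in> Fset L R lab r" "hatQadj L R lab w v" "lab v \<le> - r"
    unfolding bdF_def using hatQadj_sym by blast
  then have "w \<in> verts L R" "lab w > - r"
    unfolding Fset_def by auto
  then have "\<forall>z \<in> geod w. lab z > - r"
    using Fset_iff_geod assms(1,2) w(1) by blast
  moreover have "geod v - {v} \<subseteq> geod w \<union> {z. lab w \<le> lab z}"
    using geod_hatQadj[OF w(2)] by blast
  ultimately have "\<forall>z \<in> geod v - {v}. lab z > - r"
    using \<open>lab w > - r\<close> by fastforce
  moreover have "lab v = - r"
    using hatQadj_lab_diff[OF w(2)] w(3) \<open>lab w > - r\<close> by linarith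
  ultimately show "lab v = - r \<and> (\<forall>z \<in> geod v - {v}. lab z > - r)"
    by blast
next
  assume v: "lab v = - r \<and> (\<forall>z \<in> geod v - {v}. lab z > - r)"
  then have "v \<noteq> Spine 0"
    using assms(1,2) by auto
  then obtain u where u: "tedge L R u v"
    using exists_tedge_to assms(3) by blast
  have "geod u \<subseteq> geod v - {v}"
    using geod_tedge[OF u] tedge_notin_geod[OF u] by blast
  then have "u \<in> Fset L R lab r"
    using Fset_iff_geod[OF assms(1,2)] tedge_verts[OF u] v by blast
  moreover have "hatQadj L R lab v u"
    using hatQadj_sym[OF tedge_hatQadj[OF u]] .
  ultimately show "v \<in> bdF L R lab r"
    unfolding bdF_def using assms(3) v by auto
qed

end

theorem proposition5:
  fixes L R :: "nat \<Rightarrow> ptree" and lab :: "vtx \<Rightarrow> int" and r :: int and v :: vtx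
  assumes root_label: "lab (Spine 0) = 0"
    and edge_labels: "\<And>u w. tedge L R u w \<Longrightarrow> lab w - lab u \<in> {-1, 0, 1}"
    and left_unbounded: "\<And>m. \<exists>k. lab (leftc L !! k) < m"
    and r_pos: "r > 0"
    and v_vert: "v \<in> verts L R"
  shows "(v \<in> Fset L R lab r \<longleftrightarrow> (\<forall>v' \<in> geod v. lab v' > - r))
       \<and> (v \<in> bdF L R lab r \<longleftrightarrow> lab v = - r \<and> (\<forall>v' \<in> geod v - {v}. lab v' > - r))"
proof -
  interpret labelled_tree L R lab
    using edge_labels left_unbounded by unfold_locales
  show ?thesis
    using Fset_iff_geod[OF root_label r_pos v_vert] bdF_iff_geod[OF root_label r_pos v_vert] by blast
qed

end
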